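(* Let $n\ge2$, let $T=(n;\sigma,\delta,\tau)$ be a normal tridiagonal Toeplitz matrix with $\sigma\tau\ne0$, and let $\lambda_h=\delta+2\sqrt{\sigma\tau}\cos\frac{h\pi}{n+1}$. Then \[ \kappa_{\mathcal T}(\lambda_h)=\sqrt{\frac1n+\frac2{n-1}\cos^2\frac{h\pi}{n+1}},\qquad h=1,\dots,n. \]
   Context: $T=(n;\sigma,\delta,\tau)$ is the $n\times n$ tridiagonal Toeplitz matrix with diagonal $\delta$, superdiagonal $\tau$, subdiagonal $\sigma$. Its eigenvalue $\lambda_h$ has right eigenvector $x_h$, $x_{h,k}=(\sqrt{\sigma/\tau})^k\sin\frac{hk\pi}{n+1}$, and left eigenvector $y_h$, $y_{h,k}=(\sqrt{\bar\tau/\bar\sigma})^k\sin\frac{hk\pi}{n+1}$. Let $\widetilde x_h,\widetilde y_h$ be their normalizations, $\kappa(\lambda_h)=\|x_h\|_2\|y_h\|_2/|y_h^Hx_h|$, $W_h=\widetilde y_h\widetilde x_h^H$, $\mathcal T$ the subspace of $n\times n$ tridiagonal Toeplitz matrices, $W_h|_{\mathcal T}$ the Frobenius-orthogonal projection of $W_h$ onto $\mathcal T$, and $\kappa_{\mathcal T}(\lambda_h)=\kappa(\lambda_h)\|W_h|_{\mathcal T}\|_F$. *)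

theory Defs
  imports Complex_Main
begin

text \<open>Matrices are represented as functions nat => nat => complex, with indices
  ranging over 1..n (entries outside are irrelevant / zero); vectors as nat => complex.\<close>

definition tridiag_toeplitz :: "nat \<Rightarrow> complex \<Rightarrow> complex \<Rightarrow> complex \<Rightarrow> nat \<Rightarrow> nat \<Rightarrow> complex" where
  "tridiag_toeplitz n \<sigma> \<delta> \<tau> i j =
     (if i \<in> {1..n} \<and> j \<in> {1..n} then
        (if i = j then \<delta> else if j = i + 1 then \<tau> else if i = j + 1 then \<sigma> else 0)
      else 0)"

definition is_normal_mat :: "nat \<Rightarrow> (nat \<Rightarrow> nat \<Rightarrow> complex) \<Rightarrow> bool" where
  "is_normal_mat n A \<longleftrightarrow>
     (\<forall>i\<in>{1..n}. \<forall>j\<in>{1..n}.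
        (\<Sum>k=1..n. cnj (A k i) * A k j) = (\<Sum>k=1..n. A i k * cnj (A j k)))"

definition vnorm :: "nat \<Rightarrow> (nat \<Rightarrow> complex) \<Rightarrow> real" where
  "vnorm n x = sqrt (\<Sum>k=1..n. (cmod (x k))\<^sup>2)"

definition vinner :: "nat \<Rightarrow> (nat \<Rightarrow> complex) \<Rightarrow> (nat \<Rightarrow> complex) \<Rightarrow> complex" where
  "vinner n y x = (\<Sum>k=1..n. cnj (y k) * x k)"

text \<open>Right eigenvector x_h with r = sqrt(sigma/tau), left eigenvector y_h with
  s = sqrt(conj tau / conj sigma).\<close>
definition xvec :: "nat \<Rightarrow> complex \<Rightarrow> nat \<Rightarrow> nat \<Rightarrow> complex" where
  "xvec n r h k = r ^ k * complex_of_real (sin (real h * real k * pi / real (n + 1)))"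

definition yvec :: "nat \<Rightarrow> complex \<Rightarrow> nat \<Rightarrow> nat \<Rightarrow> complex" where
  "yvec n s h k = s ^ k * complex_of_real (sin (real h * real k * pi / real (n + 1)))"

definition kappa :: "nat \<Rightarrow> complex \<Rightarrow> complex \<Rightarrow> nat \<Rightarrow> real" where
  "kappa n r s h = vnorm n (xvec n r h) * vnorm n (yvec n s h) / cmod (vinner n (yvec n s h) (xvec n r h))"

definition Wmat :: "nat \<Rightarrow> complex \<Rightarrow> complex \<Rightarrow> nat \<Rightarrow> nat \<Rightarrow> nat \<Rightarrow> complex" where
  "Wmat n r s h i j =
     (if i \<in> {1..n} \<and> j \<in> {1..n} then
        (yvec n s h i / complex_of_real (vnorm n (yvec n s h))) *
        cnj (xvec n r h j / complex_of_real (vnorm n (xvec n r h)))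
      else 0)"

definition frob_inner :: "nat \<Rightarrow> (nat \<Rightarrow> nat \<Rightarrow> complex) \<Rightarrow> (nat \<Rightarrow> nat \<Rightarrow> complex) \<Rightarrow> complex" where
  "frob_inner n A B = (\<Sum>i=1..n. \<Sum>j=1..n. A i j * cnj (B i j))"

definition frob_norm :: "nat \<Rightarrow> (nat \<Rightarrow> nat \<Rightarrow> complex) \<Rightarrow> real" where
  "frob_norm n A = sqrt (\<Sum>i=1..n. \<Sum>j=1..n. (cmod (A i j))\<^sup>2)"

definition tt_space :: "nat \<Rightarrow> (nat \<Rightarrow> nat \<Rightarrow> complex) set" where
  "tt_space n = {A. \<exists>a b c. A = tridiag_toeplitz n a b c}"

definition proj_tt :: "nat \<Rightarrow> (nat \<Rightarrow> nat \<Rightarrow> complex) \<Rightarrow> nat \<Rightarrow> nat \<Rightarrow> complex" where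
  "proj_tt n W = (THE P. P \<in> tt_space n \<and>
      (\<forall>S\<in>tt_space n. frob_inner n (\<lambda>i j. W i j - P i j) S = 0))"

definition kappa_T :: "nat \<Rightarrow> complex \<Rightarrow> complex \<Rightarrow> nat \<Rightarrow> real" where
  "kappa_T n r s h = kappa n r s h * frob_norm n (proj_tt n (Wmat n r s h))"

end

theory Submission imports Defs begin

(* Normality of T forces |sigma| = |tau|, hence |r| = 1 and s = r: the left and right
   eigenvectors coincide, so kappa(lambda_h) = 1 and W_h = x x^H / |x|^2 with x = x_h.
   The Frobenius projection onto tridiagonal Toeplitz matrices replaces each of the three
   diagonals of W_h by its mean.  The diagonal of W_h has trace 1, and the three-term
   recurrence sin((k-1)t) + sin((k+1)t) = 2 cos t sin(kt), t = h pi/(n+1), shows that the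
   super- and subdiagonal sums are conj(r) cos t and r cos t.  Hence
   |W_h|_T|_F^2 = n (1/n)^2 + 2 (n-1) (cos t/(n-1))^2. *)

lemma sum_mult_cnj_tridiag_toeplitz_row:
  assumes "i \<in> {1..n}"
  shows "(\<Sum>j=1..n. X i j * cnj (tridiag_toeplitz n a b c i j)) =
     cnj b * X i i + (if i + 1 \<le> n then cnj c * X i (i+1) else 0)
       + (if 2 \<le> i then cnj a * X i (i-1) else 0)"
proof -
  have "(\<Sum>j=1..n. X i j * cnj (tridiag_toeplitz n a b c i j)) =
     (\<Sum>j=1..n. (if j = i then cnj b * X i i else 0) + (if j = i+1 then cnj c * X i (i+1) else 0)
        + (if j = i - 1 \<and> 2 \<le> i then cnj a * X i (i-1) else 0))"
    using assms by (intro sum.cong) (auto simp: tridiag_toeplitz_def)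
  also have "\<dots> = cnj b * X i i + (if i + 1 \<le> n then cnj c * X i (i+1) else 0)
       + (if 2 \<le> i then cnj a * X i (i-1) else 0)"
    using assms by (simp add: sum.distrib) auto
  finally show ?thesis .
qed

lemma frob_inner_tridiag_toeplitz:
  assumes "n \<ge> 1"
  shows "frob_inner n X (tridiag_toeplitz n a b c) =
    cnj b * (\<Sum>i=1..n. X i i) + cnj c * (\<Sum>i=1..n-1. X i (i+1)) + cnj a * (\<Sum>i=1..n-1. X (i+1) i)"
proof -
  have "frob_inner n X (tridiag_toeplitz n a b c) =
     (\<Sum>i=1..n. cnj b * X i i + (if i + 1 \<le> n then cnj c * X i (i+1) else 0)
       + (if 2 \<le> i then cnj a * X i (i-1) else 0))"
    unfolding frob_inner_def by (intro sum.cong refl sum_mult_cnj_tridiag_toeplitz_row)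
  also have "\<dots> = cnj b * (\<Sum>i=1..n. X i i)
     + (\<Sum>i=1..n. (if i + 1 \<le> n then cnj c * X i (i+1) else 0))
     + (\<Sum>i=1..n. (if 2 \<le> i then cnj a * X i (i-1) else 0))"
    by (simp add: sum.distrib sum_distrib_left)
  also have "(\<Sum>i=1..n. (if i + 1 \<le> n then cnj c * X i (i+1) else 0))
      = (\<Sum>i=1..n-1. cnj c * X i (i+1))"
    by (simp add: sum.If_cases) (intro sum.cong; auto)
  also have "(\<Sum>i=1..n. (if 2 \<le> i then cnj a * X i (i-1) else 0)) = (\<Sum>i=2..n. cnj a * X i (i-1))"
    by (simp add: sum.If_cases) (intro sum.cong; auto)
  also have "\<dots> = (\<Sum>i=1..n-1. cnj a * X (i+1) i)"
    using assms sum.shift_bounds_cl_nat_ivl[of "\<lambda>i. cnj a * X i (i-1)" 1 1 "n-1"]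
    by (simp add: numeral_2_eq_2)
  finally show ?thesis by (simp add: sum_distrib_left)
qed

lemma sum_diagonals_tridiag_toeplitz:
  shows "(\<Sum>i=1..n. tridiag_toeplitz n a b c i i) = of_nat n * b"
    and "(\<Sum>i=1..n-1. tridiag_toeplitz n a b c i (i+1)) = of_nat (n-1) * c"
    and "(\<Sum>i=1..n-1. tridiag_toeplitz n a b c (i+1) i) = of_nat (n-1) * a"
proof -
  have "(\<Sum>i=1..n. tridiag_toeplitz n a b c i i) = (\<Sum>i=1..n. b)"
    and "(\<Sum>i=1..n-1. tridiag_toeplitz n a b c i (i+1)) = (\<Sum>i=1..n-1. c)"
    and "(\<Sum>i=1..n-1. tridiag_toeplitz n a b c (i+1) i) = (\<Sum>i=1..n-1. a)"
    by (rule sum.cong; auto simp: tridiag_toeplitz_def)+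
  then show "(\<Sum>i=1..n. tridiag_toeplitz n a b c i i) = of_nat n * b"
    and "(\<Sum>i=1..n-1. tridiag_toeplitz n a b c i (i+1)) = of_nat (n-1) * c"
    and "(\<Sum>i=1..n-1. tridiag_toeplitz n a b c (i+1) i) = of_nat (n-1) * a"
    by simp_all
qed

lemma proj_tt_eq_diagonal_means:
  fixes W :: "nat \<Rightarrow> nat \<Rightarrow> complex"
  assumes "n \<ge> 2"
  defines "D \<equiv> (\<Sum>i=1..n. W i i)" and "U \<equiv> (\<Sum>i=1..n-1. W i (i+1))"
    and "L \<equiv> (\<Sum>i=1..n-1. W (i+1) i)"
  shows "proj_tt n W = tridiag_toeplitz n (L / of_nat (n-1)) (D / of_nat n) (U / of_nat (n-1))"
  unfolding proj_tt_def
proof (rule the_equality)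
  let ?P = "tridiag_toeplitz n (L / of_nat (n-1)) (D / of_nat n) (U / of_nat (n-1))"
  have n1: "n \<ge> 1" using assms(1) by simp
  have nz: "(of_nat n :: complex) \<noteq> 0" "(of_nat (n-1) :: complex) \<noteq> 0" using assms(1) by auto
  show "?P \<in> tt_space n \<and> (\<forall>S\<in>tt_space n. frob_inner n (\<lambda>i j. W i j - ?P i j) S = 0)"
  proof (intro conjI ballI)
    show "?P \<in> tt_space n" unfolding tt_space_def by blast
    fix S assume "S \<in> tt_space n"
    then obtain a b c where S: "S = tridiag_toeplitz n a b c" unfolding tt_space_def by blast
    show "frob_inner n (\<lambda>i j. W i j - ?P i j) S = 0"
      unfolding S frob_inner_tridiag_toeplitz[OF n1] sum_subtractf sum_diagonals_tridiag_toeplitz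
      using nz by (simp add: D_def U_def L_def)
  qed
  fix P
  assume P_orth: "P \<in> tt_space n \<and> (\<forall>S\<in>tt_space n. frob_inner n (\<lambda>i j. W i j - P i j) S = 0)"
  then obtain a b c where P: "P = tridiag_toeplitz n a b c" unfolding tt_space_def by blast
  have "frob_inner n (\<lambda>i j. W i j - P i j) (tridiag_toeplitz n 0 1 0) = 0"
    "frob_inner n (\<lambda>i j. W i j - P i j) (tridiag_toeplitz n 0 0 1) = 0"
    "frob_inner n (\<lambda>i j. W i j - P i j) (tridiag_toeplitz n 1 0 0) = 0"
    using P_orth unfolding tt_space_def by blast+
  then have "D = of_nat n * b" "U = of_nat (n-1) * c" "L = of_nat (n-1) * a"
    unfolding P frob_inner_tridiag_toeplitz[OF n1] sum_subtractf sum_diagonals_tridiag_toeplitz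
    by (simp_all add: D_def U_def L_def)
  then show "P = ?P" using P nz by simp
qed

lemma of_real_cmod_power2: "(complex_of_real (cmod z))\<^sup>2 = z * cnj z"
  by (metis complex_norm_square of_real_power)

lemma frob_norm_tridiag_toeplitz:
  assumes "n \<ge> 1"
  shows "frob_norm n (tridiag_toeplitz n a b c) =
    sqrt (real n * (cmod b)\<^sup>2 + real (n-1) * (cmod c)\<^sup>2 + real (n-1) * (cmod a)\<^sup>2)"
proof -
  let ?T = "tridiag_toeplitz n a b c"
  have "complex_of_real (\<Sum>i=1..n. \<Sum>j=1..n. (cmod (?T i j))\<^sup>2) = frob_inner n ?T ?T"
    unfolding frob_inner_def of_real_sum complex_norm_square by simp
  also have "\<dots> = complex_of_real
      (real n * (cmod b)\<^sup>2 + real (n-1) * (cmod c)\<^sup>2 + real (n-1) * (cmod a)\<^sup>2)"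
    unfolding frob_inner_tridiag_toeplitz[OF assms] sum_diagonals_tridiag_toeplitz
    by (simp add: of_real_cmod_power2 algebra_simps)
  finally show ?thesis unfolding frob_norm_def of_real_eq_iff by simp
qed

lemma cmod_eq_if_normal_tridiag_toeplitz:
  assumes "n \<ge> 2" "is_normal_mat n (tridiag_toeplitz n \<sigma> \<delta> \<tau>)"
  shows "cmod \<sigma> = cmod \<tau>"
proof -
  let ?T = "tridiag_toeplitz n \<sigma> \<delta> \<tau>"
  have "(\<Sum>k=1..n. cnj (?T k 1) * ?T k 1) = (\<Sum>k=1..n. ?T 1 k * cnj (?T 1 k))"
    using assms unfolding is_normal_mat_def by auto
  moreover have "(\<Sum>k=1..n. cnj (?T k 1) * ?T k 1) =
      (\<Sum>k=1..n. (if k = 1 then cnj \<delta> * \<delta> else 0) + (if k = 2 then cnj \<sigma> * \<sigma> else 0))"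
    using assms by (intro sum.cong) (auto simp: tridiag_toeplitz_def)
  moreover have "(\<Sum>k=1..n. ?T 1 k * cnj (?T 1 k)) =
      (\<Sum>k=1..n. (if k = 1 then \<delta> * cnj \<delta> else 0) + (if k = 2 then \<tau> * cnj \<tau> else 0))"
    using assms by (intro sum.cong) (auto simp: tridiag_toeplitz_def)
  ultimately have "\<sigma> * cnj \<sigma> = \<tau> * cnj \<tau>"
    using assms by (simp add: sum.distrib mult.commute)
  then have "(cmod \<sigma>)\<^sup>2 = (cmod \<tau>)\<^sup>2"
    by (metis of_real_cmod_power2 of_real_eq_iff of_real_power)
  then show ?thesis by simp
qed

definition eigen_angle :: "nat \<Rightarrow> nat \<Rightarrow> real" where
  "eigen_angle n h = real h * pi / real (n + 1)"

lemma sin_Suc_mult_eigen_angle: "sin (real (n + 1) * eigen_angle n h) = 0"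
  by (simp add: eigen_angle_def)

lemma sin_eigen_angle_pos:
  assumes "h \<in> {1..n}"
  shows "sin (eigen_angle n h) > 0"
proof (rule sin_gt_zero)
  show "0 < eigen_angle n h" using assms by (simp add: eigen_angle_def)
  have "pi * real h < pi * real (n + 1)" using assms by (intro mult_strict_left_mono) auto
  then show "eigen_angle n h < pi" by (simp add: eigen_angle_def field_simps)
qed

lemma xvec_eq_eigen_angle: "xvec n r h k = r ^ k * complex_of_real (sin (real k * eigen_angle n h))"
  by (simp add: xvec_def eigen_angle_def mult_ac)

lemma sum_sin_mult_sin_Suc:
  fixes a :: real
  assumes "sin (real (n + 1) * a) = 0"
  shows "(\<Sum>k=1..n-1. sin (real k * a) * sin (real (k+1) * a)) =
         cos a * (\<Sum>k=1..n. (sin (real k * a))\<^sup>2)"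
proof (cases n)
  case 0
  then show ?thesis by simp
next
  case (Suc m)
  define S where "S = (\<Sum>k=1..m. sin (real k * a) * sin (real (k+1) * a))"
  have recurrence: "sin (real (k - 1) * a) + sin (real (k+1) * a) = 2 * cos a * sin (real k * a)"
    if "k \<ge> 1" for k
  proof -
    have "real (k-1) * a = real k * a - a" "real (k+1) * a = real k * a + a"
      using that by (auto simp: algebra_simps)
    then show ?thesis by (simp add: sin_add sin_diff)
  qed
  have "(\<Sum>k=1..Suc m. sin (real k * a) * (sin (real (k - 1) * a) + sin (real (k+1) * a)))
      = 2 * cos a * (\<Sum>k=1..Suc m. (sin (real k * a))\<^sup>2)"
    unfolding sum_distrib_left
    by (intro sum.cong refl)
      (use recurrence in \<open>simp add: power2_eq_square del: of_nat_Suc of_nat_diff\<close>)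
  moreover have "(\<Sum>k=1..Suc m. sin (real k * a) * sin (real (k+1) * a)) = S"
    using assms Suc by (simp add: S_def)
  moreover have "(\<Sum>k=1..Suc m. sin (real k * a) * sin (real (k - 1) * a)) = S"
  proof -
    have "(\<Sum>k=1..Suc m. sin (real k * a) * sin (real (k - 1) * a))
       = (\<Sum>k=Suc 1..Suc m. sin (real k * a) * sin (real (k - 1) * a))"
      by (simp add: sum.atLeast_Suc_atMost)
    also have "\<dots> = (\<Sum>k=1..m. sin (real (k+1) * a) * sin (real k * a))"
      using sum.shift_bounds_cl_Suc_ivl[of "\<lambda>k. sin (real k * a) * sin (real (k - 1) * a)" 1 m]
      by simp
    finally show ?thesis by (simp add: S_def mult.commute)
  qed
  ultimately have "2 * S = 2 * cos a * (\<Sum>k=1..Suc m. (sin (real k * a))\<^sup>2)"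
    by (simp add: distrib_left sum.distrib)
  then show ?thesis
    using Suc by (simp add: S_def)
qed

lemma yvec_eq_xvec: "yvec n r h = xvec n r h"
  by (simp add: fun_eq_iff yvec_def xvec_def)

lemma vnorm_power2: "(vnorm n x)\<^sup>2 = (\<Sum>k=1..n. (cmod (x k))\<^sup>2)"
  by (simp add: vnorm_def sum_nonneg)

lemma vinner_self: "vinner n x x = complex_of_real ((vnorm n x)\<^sup>2)"
  unfolding vnorm_power2 vinner_def of_real_sum
  by (intro sum.cong refl) (simp add: of_real_cmod_power2 mult.commute)

lemma kappa_self:
  assumes "vnorm n (xvec n r h) \<noteq> 0"
  shows "kappa n r r h = 1"
  using assms unfolding kappa_def yvec_eq_xvec vinner_self norm_of_real
  by (simp add: power2_eq_square)

lemma Wmat_self: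
  assumes "i \<in> {1..n}" "j \<in> {1..n}"
  shows "Wmat n r r h i j =
    xvec n r h i * cnj (xvec n r h j) / complex_of_real ((vnorm n (xvec n r h))\<^sup>2)"
  using assms by (simp add: Wmat_def yvec_eq_xvec power2_eq_square)

lemma sum_diagonals_Wmat_self:
  fixes n h :: nat and r :: complex
  assumes "vnorm n (xvec n r h) \<noteq> 0"
  defines "N \<equiv> complex_of_real ((vnorm n (xvec n r h))\<^sup>2)"
  shows "(\<Sum>i=1..n. Wmat n r r h i i) = 1"
    and "(\<Sum>i=1..n-1. Wmat n r r h i (i+1)) = (\<Sum>i=1..n-1. xvec n r h i * cnj (xvec n r h (i+1))) / N"
    and "(\<Sum>i=1..n-1. Wmat n r r h (i+1) i) = (\<Sum>i=1..n-1. xvec n r h (i+1) * cnj (xvec n r h i)) / N"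
proof -
  have "(\<Sum>i=1..n. Wmat n r r h i i) = vinner n (xvec n r h) (xvec n r h) / N"
    unfolding vinner_def sum_divide_distrib N_def
    by (intro sum.cong refl) (simp add: Wmat_self mult.commute)
  then show "(\<Sum>i=1..n. Wmat n r r h i i) = 1"
    using assms(1) by (simp add: vinner_self N_def)
  show "(\<Sum>i=1..n-1. Wmat n r r h i (i+1)) = (\<Sum>i=1..n-1. xvec n r h i * cnj (xvec n r h (i+1))) / N"
    and "(\<Sum>i=1..n-1. Wmat n r r h (i+1) i) = (\<Sum>i=1..n-1. xvec n r h (i+1) * cnj (xvec n r h i)) / N"
    unfolding sum_divide_distrib N_def by (intro sum.cong refl; auto simp: Wmat_self)+
qed

lemma vnorm_xvec_unimodular:
  assumes "cmod r = 1"
  shows "(vnorm n (xvec n r h))\<^sup>2 = (\<Sum>k=1..n. (sin (real k * eigen_angle n h))\<^sup>2)"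
  unfolding vnorm_power2 by (simp add: xvec_eq_eigen_angle norm_mult norm_power assms)

lemma vnorm_xvec_unimodular_nonzero:
  assumes "cmod r = 1" "h \<in> {1..n}"
  shows "vnorm n (xvec n r h) \<noteq> 0"
proof -
  have "0 < (sin (real 1 * eigen_angle n h))\<^sup>2"
    using sin_eigen_angle_pos[OF assms(2)] by simp
  also have "\<dots> \<le> (vnorm n (xvec n r h))\<^sup>2"
    unfolding vnorm_xvec_unimodular[OF assms(1)] using assms(2)
    by (intro member_le_sum) auto
  finally show ?thesis by auto
qed

lemma sum_off_diagonals_xvec_unimodular:
  fixes n h :: nat and r :: complex
  assumes "cmod r = 1"
  defines "t \<equiv> eigen_angle n h"
  shows "(\<Sum>i=1..n-1. xvec n r h i * cnj (xvec n r h (i+1)))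
           = cnj r * complex_of_real (cos t * (vnorm n (xvec n r h))\<^sup>2)"
    and "(\<Sum>i=1..n-1. xvec n r h (i+1) * cnj (xvec n r h i))
           = r * complex_of_real (cos t * (vnorm n (xvec n r h))\<^sup>2)"
proof -
  have unit: "r ^ i * cnj r ^ i = 1" for i
    using complex_norm_square[of r] assms(1) by (simp flip: power_mult_distrib)
  have sines: "cos t * (vnorm n (xvec n r h))\<^sup>2 = (\<Sum>i=1..n-1. sin (real i * t) * sin (real (i+1) * t))"
    unfolding vnorm_xvec_unimodular[OF assms(1)] t_def
    by (rule sum_sin_mult_sin_Suc[OF sin_Suc_mult_eigen_angle, symmetric])
  show "(\<Sum>i=1..n-1. xvec n r h i * cnj (xvec n r h (i+1)))
           = cnj r * complex_of_real (cos t * (vnorm n (xvec n r h))\<^sup>2)"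
    unfolding sines of_real_sum sum_distrib_left
    by (intro sum.cong refl) (simp add: xvec_eq_eigen_angle t_def unit mult_ac)
  show "(\<Sum>i=1..n-1. xvec n r h (i+1) * cnj (xvec n r h i))
           = r * complex_of_real (cos t * (vnorm n (xvec n r h))\<^sup>2)"
    unfolding sines of_real_sum sum_distrib_left
    by (intro sum.cong refl) (simp add: xvec_eq_eigen_angle t_def unit mult_ac)
qed

lemma proj_tt_Wmat_unimodular:
  assumes "n \<ge> 2" "cmod r = 1" "h \<in> {1..n}"
  defines "c \<equiv> complex_of_real (cos (eigen_angle n h))"
  shows "proj_tt n (Wmat n r r h) =
    tridiag_toeplitz n (r * c / of_nat (n-1)) (1 / of_nat n) (cnj r * c / of_nat (n-1))"
proof -
  have N: "vnorm n (xvec n r h) \<noteq> 0"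
    by (rule vnorm_xvec_unimodular_nonzero[OF assms(2,3)])
  show ?thesis
    unfolding proj_tt_eq_diagonal_means[OF assms(1)] sum_diagonals_Wmat_self[OF N]
      sum_off_diagonals_xvec_unimodular[OF assms(2)]
    using N by (simp add: c_def)
qed

lemma kappa_T_unimodular:
  assumes "n \<ge> 2" "cmod r = 1" "h \<in> {1..n}"
  shows "kappa_T n r r h = sqrt (1 / real n + 2 / (real n - 1) * (cos (eigen_angle n h))\<^sup>2)"
proof -
  let ?c = "cos (eigen_angle n h)"
  have n1: "n \<ge> 1" using assms(1) by simp
  have "kappa_T n r r h = frob_norm n (proj_tt n (Wmat n r r h))"
    unfolding kappa_T_def kappa_self[OF vnorm_xvec_unimodular_nonzero[OF assms(2,3)]] by simp
  also have "\<dots> = sqrt (real n * (1 / real n)\<^sup>2 + 2 * real (n-1) * (?c / real (n-1))\<^sup>2)"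
    using assms(1) unfolding proj_tt_Wmat_unimodular[OF assms] frob_norm_tridiag_toeplitz[OF n1]
    by (simp add: norm_mult norm_divide assms(2) power_divide del: of_nat_diff)
  also have "\<dots> = sqrt (1 / real n + 2 / (real n - 1) * ?c\<^sup>2)"
  proof -
    have m: "real (n-1) = real n - 1" "real n - 1 \<noteq> 0" using assms(1) by auto
    have "real n * (1 / real n)\<^sup>2 + 2 * m * (?c / m)\<^sup>2 = 1 / real n + 2 / m * ?c\<^sup>2"
      if "m \<noteq> 0" for m :: real
      using that assms(1) by (simp add: power2_eq_square field_simps)
    from this[OF m(2)] show ?thesis unfolding m(1) by (simp only:)
  qed
  finally show ?thesis .
qed

lemma cmod_eq_1_if_normal_tridiag_toeplitz:
  assumes "n \<ge> 2" "\<sigma> * \<tau> \<noteq> 0" "is_normal_mat n (tridiag_toeplitz n \<sigma> \<delta> \<tau>)"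
    and "r\<^sup>2 = \<sigma> / \<tau>"
  shows "cmod r = 1"
proof -
  have "(cmod r)\<^sup>2 = cmod \<sigma> / cmod \<tau>"
    using assms(4) by (metis norm_divide norm_power)
  also have "\<dots> = 1"
    using cmod_eq_if_normal_tridiag_toeplitz[OF assms(1,3)] assms(2) by simp
  finally show ?thesis
    using power2_eq_iff_nonneg[of "cmod r" 1] by simp
qed

theorem corollary3:
  fixes n :: nat and \<sigma> \<delta> \<tau> r s :: complex
  assumes "n \<ge> 2"
    and "\<sigma> * \<tau> \<noteq> 0"
    and "is_normal_mat n (tridiag_toeplitz n \<sigma> \<delta> \<tau>)"
    and "r\<^sup>2 = \<sigma> / \<tau>"
    and "s\<^sup>2 = cnj \<tau> / cnj \<sigma>"
    and "cnj s * r = 1"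
  shows "\<forall>h\<in>{1..n}. kappa_T n r s h =
           sqrt (1 / real n + 2 / (real n - 1) * (cos (real h * pi / real (n + 1)))\<^sup>2)"
proof
  fix h assume h: "h \<in> {1..n}"
  (* s is determined by cnj s * r = 1 and |r| = 1. *)
  have r_unit: "cmod r = 1"
    by (rule cmod_eq_1_if_normal_tridiag_toeplitz[OF assms(1-4)])
  have "cnj s * r = cnj r * r"
    using assms(6) complex_norm_square[of r] r_unit by (simp add: mult.commute)
  then have "s = r"
    using r_unit by auto
  then show "kappa_T n r s h =
           sqrt (1 / real n + 2 / (real n - 1) * (cos (real h * pi / real (n + 1)))\<^sup>2)"
    using kappa_T_unimodular[OF assms(1) r_unit h] by (simp add: eigen_angle_def)
qed

end
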